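(* Let $\mathrm{FOV}_{\min}\in(0,\pi/2]$, $L_{\max}>0$, $A_{\max}>0$, and consider maximising $R(B,\mathrm{FOV})$ over $\{(B,\mathrm{FOV}): B>0,\ \mathrm{FOV}\in(0,\pi/2],\ \mathrm{FOV}\ge f_{\mathrm{FOV}}(B)\}$. Then for every $B>0$ with $f_{\mathrm{FOV}}(B)\le\pi/2$, the maximum of $R(B,\cdot)$ over $[f_{\mathrm{FOV}}(B),\pi/2]$ is attained uniquely at $\mathrm{FOV}=f_{\mathrm{FOV}}(B)$; consequently every maximiser $(B^*,\mathrm{FOV}^* )$ of the problem (if one exists) lies on the boundary of the feasible region, i.e. $\mathrm{FOV}^*=f_{\mathrm{FOV}}(B^* )$.
   Context: Fix constants: an integer $N_{\mathrm{tier}}\ge1$; an integer $N_{\mathrm{PD}}\ge 1$; $\mathrm{FF}\in(0,1]$; $K_{\mathrm{PD}}>0$; $n_{\mathrm{CPC}}\ge 1$; $P_{\mathrm t}>0$; $w>0$; $R_{\mathrm{PD}}>0$; $\Gamma>0$; $N_0>0$. The design variables are $B>0$ and $\mathrm{FOV}\in(0,\pi/2]$. Write $\theta=\theta_{\mathrm{CPC}}=\mathrm{FOV}/(2N_{\mathrm{tier}}+1)$. Define $D_2(B)=\frac{1}{K_{\mathrm{PD}}B}\sqrt{N_{\mathrm{PD}}/\mathrm{FF}}$, $D_1(B,\mathrm{FOV})=D_2(B)\,\frac{n_{\mathrm{CPC}}}{\sin\theta}$, $P_{\mathrm r}(B,\mathrm{FOV})=\mathrm{FF}\,P_{\mathrm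 t}\Big(1-\exp\Big(-\frac{D_1(B,\mathrm{FOV})^2}{2w^2}\Big)\Big)$, and the achievable rate $R(B,\mathrm{FOV})=B\log_2\Big(1+\frac{(R_{\mathrm{PD}}P_{\mathrm r}(B,\mathrm{FOV}))^2}{\Gamma N_0 B}\Big)$. Set $K_1=\frac{1}{2K_{\mathrm{PD}}}\sqrt{N_{\mathrm{PD}}/\mathrm{FF}}$ and $K_2=\frac{\pi N_{\mathrm{PD}}n_{\mathrm{CPC}}^2}{4\,\mathrm{FF}\,K_{\mathrm{PD}}^2}$. Given $L_{\max},A_{\max}>0$, define for $\mathrm{FOV}\in(0,\pi/2]$ the boundary functions $f_{\mathrm L}(\mathrm{FOV})=\frac{K_1}{L_{\max}}\cdot\frac{n_{\mathrm{CPC}}+\sin\theta}{\sin\theta\tan\theta}$ and $f_{\mathrm A}(\mathrm{FOV})=\frac{1}{\sin\theta}\sqrt{\frac{K_2}{A_{\max}}\Big(1+\sum_{i=1}^{N_{\mathrm{tier}}}6i\cos(2i\theta)\Big)}$, their (generalised) inverses $f_{\mathrm L}^{-1}(B)=\inf\{\mathrm{FOV}\in(0,\pi/2]: f_{\mathrm L}(\mathrm{FOV})\le B\}$ and $f_{\mathrm A}^{-1}(B)=\inf\{\mathrm{FOV}\in(0,\pi/2]: f_{\mathrm A}(\mathrm{FOV})\le B\}$ (with $\inf\emptyset=+\infty$), and $f_{\mathrm{FOV}}(B)=\max\{\mathrm{FOV}_{\min},\,f_{\mathrm L}^{-1}(B),\,f_{\mathrm A}^{-1}(B)\}$. *)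

theory Defs
  imports Complex_Main "HOL-Library.Extended_Real"
begin

record sysparams =
  Ntier :: nat
  NPD :: nat
  FF :: real
  KPD :: real
  nCPC :: real
  Pt :: real
  wb :: real
  RPD :: real
  Gam :: real
  N0 :: real

definition valid_params :: "sysparams \<Rightarrow> bool" where
  "valid_params p \<longleftrightarrow> Ntier p \<ge> 1 \<and> NPD p \<ge> 1 \<and> 0 < FF p \<and> FF p \<le> 1 \<and>
     KPD p > 0 \<and> nCPC p \<ge> 1 \<and> Pt p > 0 \<and> wb p > 0 \<and> RPD p > 0 \<and> Gam p > 0 \<and> N0 p > 0"

definition thetaCPC :: "sysparams \<Rightarrow> real \<Rightarrow> real" where
  "thetaCPC p FOV = FOV / (2 * real (Ntier p) + 1)"

definition D2 :: "sysparams \<Rightarrow> real \<Rightarrow> real" where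
  "D2 p B = 1 / (KPD p * B) * sqrt (real (NPD p) / FF p)"

definition D1 :: "sysparams \<Rightarrow> real \<Rightarrow> real \<Rightarrow> real" where
  "D1 p B FOV = D2 p B * (nCPC p / sin (thetaCPC p FOV))"

definition Prx :: "sysparams \<Rightarrow> real \<Rightarrow> real \<Rightarrow> real" where
  "Prx p B FOV = FF p * Pt p * (1 - exp (- ((D1 p B FOV)\<^sup>2 / (2 * (wb p)\<^sup>2))))"

definition rate :: "sysparams \<Rightarrow> real \<Rightarrow> real \<Rightarrow> real" where
  "rate p B FOV = B * log 2 (1 + (RPD p * Prx p B FOV)\<^sup>2 / (Gam p * N0 p * B))"

definition K1 :: "sysparams \<Rightarrow> real" where
  "K1 p = 1 / (2 * KPD p) * sqrt (real (NPD p) / FF p)"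

definition K2 :: "sysparams \<Rightarrow> real" where
  "K2 p = pi * real (NPD p) * (nCPC p)\<^sup>2 / (4 * FF p * (KPD p)\<^sup>2)"

definition fL :: "sysparams \<Rightarrow> real \<Rightarrow> real \<Rightarrow> real" where
  "fL p Lmax FOV = K1 p / Lmax *
     ((nCPC p + sin (thetaCPC p FOV)) / (sin (thetaCPC p FOV) * tan (thetaCPC p FOV)))"

definition fA :: "sysparams \<Rightarrow> real \<Rightarrow> real \<Rightarrow> real" where
  "fA p Amax FOV = 1 / sin (thetaCPC p FOV) *
     sqrt (K2 p / Amax * (1 + (\<Sum>i=1..Ntier p. 6 * real i * cos (2 * real i * thetaCPC p FOV))))"

text \<open>Generalised inverse: infimum of the admissible FOVs in (0, pi/2] with f FOV \<le> B,
  taken in the extended reals so that the infimum of the empty set is +\<infinity>.\<close>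
definition geninv :: "(real \<Rightarrow> real) \<Rightarrow> real \<Rightarrow> ereal" where
  "geninv f B = Inf (ereal ` {x. 0 < x \<and> x \<le> pi / 2 \<and> f x \<le> B})"

definition fFOV :: "sysparams \<Rightarrow> real \<Rightarrow> real \<Rightarrow> real \<Rightarrow> real \<Rightarrow> ereal" where
  "fFOV p FOVmin Lmax Amax B =
     max (ereal FOVmin) (max (geninv (fL p Lmax) B) (geninv (fA p Amax) B))"

definition feasible :: "sysparams \<Rightarrow> real \<Rightarrow> real \<Rightarrow> real \<Rightarrow> real \<Rightarrow> real \<Rightarrow> bool" where
  "feasible p FOVmin Lmax Amax B FOV \<longleftrightarrow>
     B > 0 \<and> 0 < FOV \<and> FOV \<le> pi / 2 \<and> fFOV p FOVmin Lmax Amax B \<le> ereal FOV"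

end

theory Submission
  imports Defs
begin

text \<open>Widening the FOV widens the CPC acceptance angle, which shrinks the lens diameter D1 and with
  it the captured Gaussian power; since the rate is increasing in the received power, R(B, \<cdot>) is
  strictly decreasing on (0, pi/2]. Hence on [f_FOV(B), pi/2] the rate is uniquely maximised at the
  left end point, and a global maximiser with FOV* > f_FOV(B*) could be improved by moving FOV* down
  to the feasible value f_FOV(B*).\<close>

lemma thetaCPC_pos: "0 < FOV \<Longrightarrow> 0 < thetaCPC p FOV"
  unfolding thetaCPC_def by (simp add: add_pos_nonneg)

lemma thetaCPC_le: "0 \<le> FOV \<Longrightarrow> thetaCPC p FOV \<le> FOV"
  unfolding thetaCPC_def by (simp add: divide_le_eq mult_le_cancel_left1)

lemma thetaCPC_strict_mono: "x < y \<Longrightarrow> thetaCPC p x < thetaCPC p y"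
  unfolding thetaCPC_def by (simp add: divide_strict_right_mono add_pos_nonneg)

lemma sin_thetaCPC_strict_mono:
  assumes "0 < x" "x < y" "y \<le> pi / 2"
  shows "0 < sin (thetaCPC p x)" and "sin (thetaCPC p x) < sin (thetaCPC p y)"
proof -
  have "0 < thetaCPC p x" "thetaCPC p x < thetaCPC p y" "thetaCPC p y \<le> pi / 2"
    using assms thetaCPC_pos thetaCPC_strict_mono thetaCPC_le[of y p] by fastforce+
  then show "0 < sin (thetaCPC p x)" "sin (thetaCPC p x) < sin (thetaCPC p y)"
    by (auto intro: sin_gt_zero sin_mono_less_eq[THEN iffD2])
qed

lemma D1_strict_antimono:
  assumes "valid_params p" "B > 0" "0 < x" "x < y" "y \<le> pi / 2"
  shows "0 < D1 p B y" and "D1 p B y < D1 p B x"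
proof -
  have "D2 p B > 0" "nCPC p > 0"
    using assms(1,2) unfolding valid_params_def D2_def by auto
  moreover note sin_thetaCPC_strict_mono[OF assms(3-5), of p]
  ultimately show "0 < D1 p B y" "D1 p B y < D1 p B x"
    unfolding D1_def by (auto simp: frac_less2)
qed

lemma gaussian_capture_strict_mono:
  fixes w d d' :: real
  assumes "w > 0" "0 < d" "d < d'"
  shows "0 < 1 - exp (- (d\<^sup>2 / (2 * w\<^sup>2)))"
    and "1 - exp (- (d\<^sup>2 / (2 * w\<^sup>2))) < 1 - exp (- (d'\<^sup>2 / (2 * w\<^sup>2)))"
proof -
  have "d\<^sup>2 < d'\<^sup>2" using assms by (simp add: power_strict_mono)
  then show "1 - exp (- (d\<^sup>2 / (2 * w\<^sup>2))) < 1 - exp (- (d'\<^sup>2 / (2 * w\<^sup>2)))"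
    using assms(1) by (simp add: divide_strict_right_mono)
  show "0 < 1 - exp (- (d\<^sup>2 / (2 * w\<^sup>2)))" using assms by simp
qed

lemma shannon_rate_strict_mono:
  fixes B c r P P' :: real
  assumes "B > 0" "c > 0" "r > 0" "0 < P" "P < P'"
  shows "B * log 2 (1 + (r * P)\<^sup>2 / (c * B)) < B * log 2 (1 + (r * P')\<^sup>2 / (c * B))"
proof -
  have "(r * P)\<^sup>2 < (r * P')\<^sup>2"
    using assms by (intro power_strict_mono) auto
  then have "(r * P)\<^sup>2 / (c * B) < (r * P')\<^sup>2 / (c * B)"
    using assms(1,2) by (simp add: divide_strict_right_mono)
  moreover have "0 < 1 + (r * P)\<^sup>2 / (c * B)"
    using assms(1,2) by (simp add: add_pos_nonneg)
  ultimately show ?thesis using assms(1) by simp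
qed

lemma rate_strict_antimono:
  assumes vp: "valid_params p" and "B > 0" "0 < x" "x < y" "y \<le> pi / 2"
  shows "rate p B y < rate p B x"
proof -
  have par: "FF p > 0" "Pt p > 0" "wb p > 0" "RPD p > 0" "Gam p * N0 p > 0"
    using vp unfolding valid_params_def by auto
  note D1 = D1_strict_antimono[OF assms]
  have "0 < Prx p B y" "Prx p B y < Prx p B x"
    unfolding Prx_def using gaussian_capture_strict_mono[OF par(3) D1] par(1,2) by simp_all
  then show ?thesis
    unfolding rate_def using shannon_rate_strict_mono[OF \<open>B > 0\<close> par(5,4)] by blast
qed

lemma fFOV_finite:
  assumes "fFOV p FOVmin Lmax Amax B \<le> ereal (pi / 2)"
  obtains F where "fFOV p FOVmin Lmax Amax B = ereal F" "FOVmin \<le> F" "F \<le> pi / 2"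
proof -
  have "ereal FOVmin \<le> fFOV p FOVmin Lmax Amax B" unfolding fFOV_def by simp
  with assms that show ?thesis by (cases "fFOV p FOVmin Lmax Amax B") auto
qed

theorem lemma2:
  fixes p :: sysparams and FOVmin Lmax Amax :: real
  assumes "valid_params p"
    and "0 < FOVmin" and "FOVmin \<le> pi / 2" and "Lmax > 0" and "Amax > 0"
  shows "(\<forall>B > 0. fFOV p FOVmin Lmax Amax B \<le> ereal (pi / 2) \<longrightarrow>
            (let F = real_of_ereal (fFOV p FOVmin Lmax Amax B) in
               F \<in> {F..pi / 2} \<and>
               (\<forall>FOV \<in> {F..pi / 2}. FOV \<noteq> F \<longrightarrow> rate p B FOV < rate p B F)))
       \<and> (\<forall>Bs FOVs. feasible p FOVmin Lmax Amax Bs FOVs \<and>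
            (\<forall>B FOV. feasible p FOVmin Lmax Amax B FOV \<longrightarrow> rate p B FOV \<le> rate p Bs FOVs)
            \<longrightarrow> ereal FOVs = fFOV p FOVmin Lmax Amax Bs)"
proof (intro conjI allI impI)
  fix B :: real
  assume "B > 0" and le: "fFOV p FOVmin Lmax Amax B \<le> ereal (pi / 2)"
  obtain F where F: "fFOV p FOVmin Lmax Amax B = ereal F" "FOVmin \<le> F" "F \<le> pi / 2"
    using le by (rule fFOV_finite)
  have "rate p B FOV < rate p B F" if "FOV \<in> {F..pi / 2}" "FOV \<noteq> F" for FOV
    using that F(2,3) assms(1,2) \<open>B > 0\<close> by (intro rate_strict_antimono) auto
  then show "let F = real_of_ereal (fFOV p FOVmin Lmax Amax B) in
               F \<in> {F..pi / 2} \<and> (\<forall>FOV \<in> {F..pi / 2}. FOV \<noteq> F \<longrightarrow> rate p B FOV < rate p B F)"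
    unfolding F(1) Let_def using F(3) by simp
next
  fix Bs FOVs
  assume "feasible p FOVmin Lmax Amax Bs FOVs \<and>
    (\<forall>B FOV. feasible p FOVmin Lmax Amax B FOV \<longrightarrow> rate p B FOV \<le> rate p Bs FOVs)"
  then have fe: "Bs > 0" "0 < FOVs" "FOVs \<le> pi / 2" "fFOV p FOVmin Lmax Amax Bs \<le> ereal FOVs"
    and opt: "\<And>B FOV. feasible p FOVmin Lmax Amax B FOV \<Longrightarrow> rate p B FOV \<le> rate p Bs FOVs"
    unfolding feasible_def by auto
  have "fFOV p FOVmin Lmax Amax Bs \<le> ereal (pi / 2)"
    using fe(3,4) order.trans by fastforce
  then obtain F where F: "fFOV p FOVmin Lmax Amax Bs = ereal F" "FOVmin \<le> F" "F \<le> pi / 2"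
    by (rule fFOV_finite)
  have "rate p Bs F \<le> rate p Bs FOVs"
    using opt F fe assms(2) unfolding feasible_def by auto
  moreover have "rate p Bs FOVs < rate p Bs F" if "F < FOVs"
    using rate_strict_antimono[OF assms(1) fe(1) _ that fe(3)] F(2) assms(2) by simp
  ultimately have "\<not> F < FOVs" by fastforce
  then show "ereal FOVs = fFOV p FOVmin Lmax Amax Bs" using fe(4) F(1) by auto
qed

end
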